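(* Let $m\ge0$ be an integer. For each $n\ge0$ and $x\in O$: (1) $\mathcal{D}_n(x)^{q^m}=\sum_{i=0}^\infty[m]^i\binom{i+n}{n}\mathcal{D}_{i+n}(x)$; (2) $\mathcal{D}_n(x)=\sum_{i=0}^\infty(-[m])^i\binom{i+n}{n}\mathcal{D}_{i+n}(x)^{q^m}$.
   Context: Let $q$ be a prime power, $O=\mathbf{F}_q[[T]]$ with the $T$-adic topology. Put $[m]=T^{q^m}-T$. Hasse derivatives: $\mathcal{D}_n(\sum_ia_iT^i)=\sum_i\binom{i}{n}a_iT^{i-n}$; all binomial coefficients are read in $\mathbf{F}_q$. *)

theory Defs
  imports "HOL-Computational_Algebra.Formal_Power_Series" "HOL-Library.Cardinality"
begin

(* O = F_q[[T]] is rendered as 'a fps for a finite field 'a (q = CARD('a));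
   the T-adic topology is the library metric on fps. *)

definition hasse :: "nat \<Rightarrow> 'a::comm_ring_1 fps \<Rightarrow> 'a fps" where
  "hasse n x = Abs_fps (\<lambda>k. of_nat ((k + n) choose n) * fps_nth x (k + n))"

definition bracket :: "nat \<Rightarrow> 'a::{finite,comm_ring_1} fps" where
  "bracket m = fps_X ^ (CARD('a) ^ m) - fps_X"

end

theory Submission
  imports Defs "HOL-Algebra.Algebraic_Closure_Type"
begin

(* Taylor's formula for Hasse derivatives, f(g + h) = sum_i h^i (D_i f)(g) for g, h without
   constant term, holds for polynomials f by the binomial theorem, and extends to all power series
   because the coefficient of T^N on either side depends only on the coefficients of f up to T^N.
   Over F_q the map f |-> f^(q^m) is additive and fixes the constants, hence f^(q^m) = f(T^(q^m)).
   With D_i D_n = binom(i+n,n) D_(i+n), Taylor's formula for D_n x at (g, h) = (T, [m]) is (1),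
   and at (g, h) = (T^(q^m), -[m]) it is (2). *)

lemma power_card_eq_self:
  fixes x :: "'a::{field,finite}"
  shows "x ^ CARD('a) = x"
proof (cases "x = 0")
  case False
  define K where "K = (ring_of_type_algebra :: 'a ring)"
  interpret K: field K
    unfolding K_def by rule
  have units: "Units K = UNIV - {0}"
    using K.field_Units by (simp add: K_def ring_of_type_algebra_def)
  have pow: "x [^]\<^bsub>K\<^esub> n = x ^ n" for n :: nat
    by (induction n) (simp_all add: K_def ring_of_type_algebra_def)
  have "x [^]\<^bsub>K\<^esub> card (Units K) = \<one>\<^bsub>K\<^esub>"
    using False by (intro K.units_power_order_eq_one) (simp_all add: units)
  moreover have "card (Units K) = CARD('a) - 1"
    by (simp add: units card_Diff_singleton)
  moreover have "\<one>\<^bsub>K\<^esub> = 1"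
    by (simp add: K_def ring_of_type_algebra_def)
  ultimately have "x ^ (CARD('a) - 1) = 1"
    by (simp only: pow)
  moreover have "CARD('a) = Suc (CARD('a) - 1)"
    using finite_UNIV_card_ge_0[where 'a='a] by simp
  ultimately show ?thesis
    by (metis power_Suc mult_1_right)
qed simp

lemma power_card_power_eq_self:
  fixes x :: "'a::{field,finite}"
  shows "x ^ (CARD('a) ^ m) = x"
  by (induction m) (simp_all add: power_card_eq_self power_mult)

lemma of_nat_card_choose_eq_0:
  assumes "0 < k" and "k < CARD('a::{field,finite})"
  shows "of_nat (CARD('a) choose k) = (0::'a)"
proof -
  define q where "q = CARD('a)"
  define P :: "'a poly" where "P = [:1, 1:] ^ q - [:0, 1:] ^ q - 1"
  have "P = 0"
  proof (rule ccontr)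
    assume "P \<noteq> 0"
    have "degree P \<le> q"
      unfolding P_def
      by (intro degree_diff_le order.trans[OF degree_power_le]) auto
    moreover have "coeff P q = 0"
      using assms by (simp add: P_def coeff_linear_poly_power q_def)
    ultimately have "degree P < q"
      using \<open>P \<noteq> 0\<close> by (metis le_neq_implies_less leading_coeff_0_iff)
    moreover have "{x. poly P x = 0} = UNIV"
      by (simp add: P_def q_def power_card_eq_self add.commute)
    ultimately show False
      using card_poly_roots_bound[OF \<open>P \<noteq> 0\<close>] by (simp add: q_def)
  qed
  then have "coeff P k = 0"
    by simp
  then show ?thesis
    using assms by (simp add: P_def coeff_linear_poly_power q_def power_0_left)
qed

lemma fps_power_card_add:
  fixes f g :: "'a::{field,finite} fps"
  shows "(f + g) ^ CARD('a) = f ^ CARD('a) + g ^ CARD('a)"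
proof -
  define q where "q = CARD('a)"
  have "(f + g) ^ q = (\<Sum>k\<le>q. of_nat (q choose k) * f ^ k * g ^ (q - k))"
    by (rule binomial_ring)
  also have "\<dots> = (\<Sum>k\<in>{0, q}. of_nat (q choose k) * f ^ k * g ^ (q - k))"
  proof (intro sum.mono_neutral_right ballI)
    fix k
    assume "k \<in> {..q} - {0, q}"
    then have "of_nat (q choose k) = fps_const (0::'a)"
      using of_nat_card_choose_eq_0[of k, where 'a='a] by (simp flip: fps_of_nat add: q_def)
    then show "of_nat (q choose k) * f ^ k * g ^ (q - k) = 0"
      by simp
  qed auto
  finally show ?thesis
    using finite_UNIV_card_ge_0[where 'a='a] by (simp add: q_def add.commute)
qed

lemma fps_power_card_power_add:
  fixes f g :: "'a::{field,finite} fps"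
  shows "(f + g) ^ (CARD('a) ^ m) = f ^ (CARD('a) ^ m) + g ^ (CARD('a) ^ m)"
  by (induction m arbitrary: f g) (simp_all add: power_mult fps_power_card_add)

lemma fps_power_card_power_sum:
  fixes f :: "'b \<Rightarrow> 'a::{field,finite} fps"
  shows "(\<Sum>i\<in>A. f i) ^ (CARD('a) ^ m) = (\<Sum>i\<in>A. f i ^ (CARD('a) ^ m))"
  by (induction A rule: infinite_finite_induct)
     (simp_all add: fps_power_card_power_add finite_UNIV_card_ge_0)

lemma fps_X_power_dvd_iff:
  fixes f :: "'a::comm_ring_1 fps"
  shows "fps_X ^ k dvd f \<longleftrightarrow> (\<forall>j<k. f $ j = 0)"
proof
  assume "fps_X ^ k dvd f"
  then obtain g where "f = fps_X ^ k * g" ..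
  then show "\<forall>j<k. f $ j = 0"
    by (simp add: fps_X_power_mult_nth)
next
  assume "\<forall>j<k. f $ j = 0"
  then have "fps_cutoff k f = 0"
    by (simp add: fps_eq_iff)
  then have "f = fps_X ^ k * fps_shift k f"
    using fps_shift_cutoff'[of k f] by simp
  then show "fps_X ^ k dvd f" ..
qed

lemma fps_X_power_dvd_diff_cutoff:
  fixes f :: "'a::comm_ring_1 fps"
  shows "fps_X ^ n dvd f - fps_cutoff n f"
  by (simp add: fps_X_power_dvd_iff)

lemma fps_X_power_dvd_compose:
  fixes f g :: "'a::idom fps"
  assumes "g $ 0 = 0" and "fps_X ^ k dvd f"
  shows "fps_X ^ k dvd f oo g"
proof -
  obtain u where "f = fps_X ^ k * u"
    using assms(2) ..
  then have "f oo g = g ^ k * (u oo g)"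
    by (simp add: fps_compose_mult_distrib fps_X_power_compose assms(1))
  moreover have "fps_X dvd g"
    using assms(1) fps_X_power_dvd_iff[of 1 g] by simp
  ultimately show ?thesis
    by (simp add: dvd_mult2 dvd_power_same)
qed

lemma fps_cutoff_eq_sum: "fps_cutoff n f = (\<Sum>k<n. fps_const (f $ k) * fps_X ^ k)"
  by (simp add: fps_eq_iff fps_sum_nth if_distrib[of "(*) _"] cong: if_cong)

lemma hasse_nth [simp]: "hasse n f $ k = of_nat ((k + n) choose n) * f $ (k + n)"
  by (simp add: hasse_def)

lemma hasse_add: "hasse i (f + g) = hasse i f + hasse i g"
  by (simp add: fps_eq_iff algebra_simps)

lemma hasse_sum: "hasse i (\<Sum>k\<in>A. f k) = (\<Sum>k\<in>A. hasse i (f k))"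
  by (induction A rule: infinite_finite_induct) (simp_all add: hasse_add fps_eq_iff)

lemma hasse_fps_const_mult: "hasse i (fps_const c * f) = fps_const c * hasse i f"
  by (simp add: fps_eq_iff algebra_simps)

lemma hasse_fps_X_power:
  "hasse i (fps_X ^ k :: 'a::comm_ring_1 fps) =
     (if i \<le> k then of_nat (k choose i) * fps_X ^ (k - i) else 0)"
  by (auto simp: fps_eq_iff simp flip: fps_of_nat)

lemma hasse_hasse: "hasse i (hasse n f) = of_nat ((i + n) choose n) * hasse (i + n) f"
proof (rule fps_ext)
  fix k
  have "((k + i) choose i) * ((k + (i + n)) choose n) = ((i + n) choose n) * ((k + (i + n)) choose (i + n))"
    using choose_mult[of n "i + n" "k + i + n"] by (simp add: ac_simps)
  then have "of_nat ((k + i) choose i) * of_nat ((k + (i + n)) choose n) =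
      (of_nat ((i + n) choose n) * of_nat ((k + (i + n)) choose (i + n)) :: 'a)"
    by (simp flip: of_nat_mult)
  then show "hasse i (hasse n f) $ k = (of_nat ((i + n) choose n) * hasse (i + n) f) $ k"
    by (simp add: add.assoc mult.assoc flip: fps_of_nat) (simp flip: mult.assoc)
qed

lemma fps_X_power_dvd_hasse: "fps_X ^ k dvd f \<Longrightarrow> fps_X ^ (k - i) dvd hasse i f"
  by (simp add: fps_X_power_dvd_iff)

lemma hasse_taylor_fps_X_power:
  fixes g h :: "'a::idom fps"
  assumes "g $ 0 = 0" and "k < n"
  shows "(\<Sum>i<n. h ^ i * (hasse i (fps_X ^ k) oo g)) = (g + h) ^ k"
proof -
  have term_eq: "h ^ i * (hasse i (fps_X ^ k) oo g) =
      (if i \<le> k then of_nat (k choose i) * h ^ i * g ^ (k - i) else 0)" for i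
    by (simp add: hasse_fps_X_power fps_compose_mult_distrib fps_X_power_compose assms(1) mult_ac
        flip: fps_of_nat)
  have "(\<Sum>i<n. h ^ i * (hasse i (fps_X ^ k) oo g)) = (\<Sum>i\<le>k. of_nat (k choose i) * h ^ i * g ^ (k - i))"
    unfolding term_eq using assms(2) by (intro sum.mono_neutral_cong_right) auto
  also have "\<dots> = (h + g) ^ k"
    by (rule binomial_ring[symmetric])
  finally show ?thesis
    by (simp add: add.commute)
qed

lemma hasse_taylor_fps_cutoff:
  fixes f g h :: "'a::idom fps"
  assumes "g $ 0 = 0" and "h $ 0 = 0" and "N \<le> n"
  shows "(\<Sum>i<n. h ^ i * (hasse i (fps_cutoff N f) oo g)) = fps_cutoff N f oo (g + h)"
proof -
  have gh: "(g + h) $ 0 = 0"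
    using assms by simp
  have "(\<Sum>i<n. h ^ i * (hasse i (fps_cutoff N f) oo g)) =
      (\<Sum>k<N. fps_const (f $ k) * (\<Sum>i<n. h ^ i * (hasse i (fps_X ^ k) oo g)))"
    by (simp add: fps_cutoff_eq_sum hasse_sum hasse_fps_const_mult fps_compose_sum_distrib
        fps_compose_mult_distrib assms(1) sum_distrib_left mult.left_commute sum.swap[of _ "{..<n}"])
  also have "\<dots> = (\<Sum>k<N. fps_const (f $ k) * (g + h) ^ k)"
    using assms(3) by (intro sum.cong refl) (simp add: hasse_taylor_fps_X_power assms(1))
  also have "\<dots> = fps_cutoff N f oo (g + h)"
    by (simp add: fps_cutoff_eq_sum fps_compose_sum_distrib fps_compose_mult_distrib[OF gh]
        fps_X_power_compose[OF gh])
  finally show ?thesis .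
qed

lemma hasse_taylor:
  fixes f g h :: "'a::idom fps"
  assumes "g $ 0 = 0" and "h $ 0 = 0"
  shows "(\<lambda>i. h ^ i * (hasse i f oo g)) sums (f oo (g + h))"
  unfolding sums_def
proof (rule tendsto_fpsI)
  fix N
  define P where "P = fps_cutoff (Suc N) f"
  define R where "R = f - P"
  have R: "fps_X ^ Suc N dvd R"
    unfolding R_def P_def by (rule fps_X_power_dvd_diff_cutoff)
  have R_term: "fps_X ^ Suc N dvd h ^ i * (hasse i R oo g)" for i
  proof -
    have "fps_X ^ i dvd h ^ i"
      using assms(2) fps_X_power_dvd_iff[of 1 h] by (simp add: dvd_power_same)
    moreover have "fps_X ^ (Suc N - i) dvd hasse i R oo g"
      using R by (intro fps_X_power_dvd_compose fps_X_power_dvd_hasse assms(1))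
    ultimately have "fps_X ^ (i + (Suc N - i)) dvd h ^ i * (hasse i R oo g)"
      by (simp add: power_add mult_dvd_mono)
    then show ?thesis
      by (rule dvd_trans[OF le_imp_power_dvd, rotated]) simp
  qed
  have R_sum: "fps_X ^ Suc N dvd R oo (g + h)"
    using R assms by (intro fps_X_power_dvd_compose) simp_all
  show "\<forall>\<^sub>F n in sequentially. (\<Sum>i<n. h ^ i * (hasse i f oo g)) $ N = (f oo (g + h)) $ N"
    using eventually_ge_at_top[of "Suc N"]
  proof eventually_elim
    case (elim n)
    have f: "f = P + R"
      by (simp add: R_def)
    have "(\<Sum>i<n. h ^ i * (hasse i P oo g)) = P oo (g + h)"
      unfolding P_def using elim by (intro hasse_taylor_fps_cutoff assms)
    then have "(\<Sum>i<n. h ^ i * (hasse i f oo g)) =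
        (P oo (g + h)) + (\<Sum>i<n. h ^ i * (hasse i R oo g))"
      by (subst f) (simp add: hasse_add fps_compose_add_distrib distrib_left sum.distrib)
    moreover have "f oo (g + h) = (P oo (g + h)) + (R oo (g + h))"
      by (subst f) (rule fps_compose_add_distrib)
    moreover have "fps_X ^ Suc N dvd (\<Sum>i<n. h ^ i * (hasse i R oo g))"
      using R_term by (simp add: dvd_sum del: power_Suc)
    ultimately show ?case
      using R_sum unfolding fps_X_power_dvd_iff by simp
  qed
qed

lemma fps_cutoff_power_card_power:
  fixes f :: "'a::{field,finite} fps"
  shows "fps_cutoff n f ^ (CARD('a) ^ m) = fps_cutoff n f oo fps_X ^ (CARD('a) ^ m)"
proof -
  define Q where "Q = CARD('a) ^ m"
  have X: "(fps_X ^ Q :: 'a fps) $ 0 = 0"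
    by (simp add: Q_def finite_UNIV_card_ge_0)
  have "fps_cutoff n f ^ Q = (\<Sum>k<n. (fps_const (f $ k) * fps_X ^ k) ^ Q)"
    unfolding fps_cutoff_eq_sum Q_def by (rule fps_power_card_power_sum)
  also have "\<dots> = (\<Sum>k<n. fps_const (f $ k) * (fps_X ^ Q) ^ k)"
    by (simp add: Q_def power_mult_distrib fps_const_power power_card_power_eq_self
        flip: power_mult add: mult.commute)
  also have "\<dots> = fps_cutoff n f oo fps_X ^ Q"
    by (simp add: fps_cutoff_eq_sum fps_compose_sum_distrib fps_compose_mult_distrib[OF X]
        fps_X_power_compose[OF X])
  finally show ?thesis
    by (simp add: Q_def)
qed

lemma fps_power_card_power_eq_compose:
  fixes f :: "'a::{field,finite} fps"
  shows "f ^ (CARD('a) ^ m) = f oo fps_X ^ (CARD('a) ^ m)"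
proof (rule fps_ext)
  fix N
  define Q where "Q = CARD('a) ^ m"
  have Q: "0 < Q"
    by (simp add: Q_def finite_UNIV_card_ge_0)
  define P where "P = fps_cutoff (Suc N) f"
  define R where "R = f - P"
  have f: "f = P + R"
    by (simp add: R_def)
  have R: "fps_X ^ Suc N dvd R"
    unfolding R_def P_def by (rule fps_X_power_dvd_diff_cutoff)
  have "f ^ Q = P ^ Q + R ^ Q"
    by (subst f) (simp add: Q_def fps_power_card_power_add)
  moreover have "P ^ Q = P oo fps_X ^ Q"
    unfolding P_def Q_def by (rule fps_cutoff_power_card_power)
  moreover have "f oo fps_X ^ Q = (P oo fps_X ^ Q) + (R oo fps_X ^ Q)"
    by (subst f) (rule fps_compose_add_distrib)
  moreover have "fps_X ^ Suc N dvd R ^ Q"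
    using dvd_trans[OF R dvd_power[of Q R]] Q by simp
  moreover have "fps_X ^ Suc N dvd R oo fps_X ^ Q"
    using R Q by (intro fps_X_power_dvd_compose) simp_all
  ultimately show "(f ^ (CARD('a) ^ m)) $ N = (f oo fps_X ^ (CARD('a) ^ m)) $ N"
    unfolding fps_X_power_dvd_iff Q_def by simp
qed

lemma fps_of_nat_power_card_power: "(of_nat c :: 'a::{field,finite} fps) ^ (CARD('a) ^ m) = of_nat c"
  by (metis fps_power_card_power_eq_compose fps_const_compose fps_of_nat)

theorem proposition5:
  fixes x :: "'a::{field,finite} fps" and m n :: nat
  shows "(\<lambda>i. (bracket m :: 'a fps) ^ i * of_nat ((i + n) choose n) * hasse (i + n) x)
            sums (hasse n x ^ (CARD('a) ^ m))
         \<and> (\<lambda>i. (- (bracket m :: 'a fps)) ^ i * of_nat ((i + n) choose n) * hasse (i + n) x ^ (CARD('a) ^ m))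
            sums (hasse n x)"
proof -
  define Q where "Q = CARD('a) ^ m"
  have Q: "0 < Q"
    by (simp add: Q_def finite_UNIV_card_ge_0)
  have bracket: "bracket m = fps_X ^ Q - (fps_X :: 'a fps)"
    by (simp add: bracket_def Q_def)
  have frobenius: "f oo fps_X ^ Q = f ^ Q" for f :: "'a fps"
    unfolding Q_def by (rule fps_power_card_power_eq_compose[symmetric])
  have of_nat_fixed: "(of_nat c :: 'a fps) ^ Q = of_nat c" for c
    unfolding Q_def by (rule fps_of_nat_power_card_power)
  have "(\<lambda>i. bracket m ^ i * (hasse i (hasse n x) oo fps_X)) sums (hasse n x oo (fps_X + bracket m))"
    by (rule hasse_taylor) (simp_all add: bracket Q)
  then have first: "(\<lambda>i. bracket m ^ i * of_nat ((i + n) choose n) * hasse (i + n) x) sums (hasse n x ^ Q)"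
    by (simp add: bracket frobenius hasse_hasse mult.assoc)
  have "(\<lambda>i. (- bracket m) ^ i * (hasse i (hasse n x) oo fps_X ^ Q))
      sums (hasse n x oo (fps_X ^ Q + - bracket m))"
    by (rule hasse_taylor) (simp_all add: bracket Q)
  then have second: "(\<lambda>i. (- bracket m) ^ i * of_nat ((i + n) choose n) * hasse (i + n) x ^ Q)
      sums (hasse n x)"
    by (simp add: bracket frobenius hasse_hasse power_mult_distrib mult.assoc of_nat_fixed)
  show ?thesis
    using first second by (simp add: Q_def)
qed

end
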